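(* Let $\phi:\mathcal M_1\to\mathcal M_2$ be a homomorphism of local Moufang sets, with $\mathcal M_1=(X,(U_x))$, and let $\theta_x:U_x\to V_{x\phi}$ ($x\in X$) be the induced group homomorphisms. The following are equivalent: (i) $\phi$ is injective; (ii) $\theta_x$ is injective for all $x\in X$; (iii) $\theta_x$ is injective for some $x\in X$.
   Context: Group actions are right actions; maps are composed left to right, so $u\phi$ means first $u$ then $\phi$. For $(X,\sim)$, $\overline x$ is the class of $x$, $\overline X$ the set of classes, $\mathrm{Sym}(X,\sim)$ the bijections $g$ with $x\sim y\iff xg\sim yg$, $\overline U$ the induced group on $\overline X$. A local Moufang set is $(X,\sim)$ with $|\overline X|>2$ and subgroups $U_x\le\mathrm{Sym}(X,\sim)$ ($x\in X$) with: (LM0) $x\sim y\Rightarrow\overline{U_x}=\overline{U_y}$; (LM1) $U_x$ fixes $x$ and is sharply transitive on $X\setminus\overline x$; (LM1') $\overline{U_x}$ fixes $\overline x$ and is sharply transitive on $\overline X\setminus\{\overline x\}$; (LM2) $U_x^g=U_{xg}$ for all $x$ and all $g\in\langle U_y\rangle$, where $g^h=h^{-1}gh$. A homomorphism $\mathcal M_1=(X,(U_x))\to\mathcal M_2=(Y,(V_y))$ is a map $\phi:X\to Y$ such that $x\sim x'\iff x\phi\sim x'\phi$ for all $x,x'\in X$, and $U_x\phi\subseteq\phi V_{x\phi}$ for all $x$. For each $x\in X$ the induced map $\theta_x:U_x\to V_{x\phi}$ is the unique map with $u\phi=\phi\,\theta_x(u)$ for all $u\in U_x$ (it exists and is a group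 homomorphism). *)

theory Defs
  imports "HOL-Algebra.Generated_Groups"
begin

text \<open>Conventions: group elements act on the right, so the image of x under g is g x,
and the product g h (first g, then h) is the function h \<circ> g.  The equivalence relation
~ is given as a relation E with equiv X E; the class of x is E `` {x} and the set of
classes is X // E.\<close>

definition sym_set :: "'a set \<Rightarrow> 'a rel \<Rightarrow> ('a \<Rightarrow> 'a) set" where
  "sym_set X E = {g. bij_betw g X X \<and> (\<forall>x. x \<notin> X \<longrightarrow> g x = x) \<and>
      (\<forall>x\<in>X. \<forall>y\<in>X. (x, y) \<in> E \<longleftrightarrow> (g x, g y) \<in> E)}"

definition sym_group :: "'a set \<Rightarrow> 'a rel \<Rightarrow> ('a \<Rightarrow> 'a) monoid" where
  "sym_group X E = \<lparr>carrier = sym_set X E, mult = (\<lambda>g h. h \<circ> g), one = id\<rparr>"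

definition induced :: "'a set \<Rightarrow> 'a rel \<Rightarrow> ('a \<Rightarrow> 'a) \<Rightarrow> 'a set \<Rightarrow> 'a set" where
  "induced X E g = restrict (\<lambda>C. g ` C) (X // E)"

definition induced_group :: "'a set \<Rightarrow> 'a rel \<Rightarrow> ('a \<Rightarrow> 'a) set \<Rightarrow> ('a set \<Rightarrow> 'a set) set" where
  "induced_group X E G = induced X E ` G"

definition local_moufang_set :: "'a set \<Rightarrow> 'a rel \<Rightarrow> ('a \<Rightarrow> ('a \<Rightarrow> 'a) set) \<Rightarrow> bool" where
  "local_moufang_set X E U \<longleftrightarrow>
     equiv X E \<and>
     (\<exists>A\<in>X // E. \<exists>B\<in>X // E. \<exists>C\<in>X // E. A \<noteq> B \<and> A \<noteq> C \<and> B \<noteq> C) \<and>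
     (\<forall>x\<in>X. subgroup (U x) (sym_group X E)) \<and>
     \<comment> \<open>LM0\<close>
     (\<forall>x\<in>X. \<forall>y\<in>X. (x, y) \<in> E \<longrightarrow> induced_group X E (U x) = induced_group X E (U y)) \<and>
     \<comment> \<open>LM1\<close>
     (\<forall>x\<in>X. (\<forall>g\<in>U x. g x = x) \<and>
        (\<forall>y\<in>X - E `` {x}. \<forall>z\<in>X - E `` {x}. \<exists>!g. g \<in> U x \<and> g y = z)) \<and>
     \<comment> \<open>LM1'\<close>
     (\<forall>x\<in>X. (\<forall>h\<in>induced_group X E (U x). h (E `` {x}) = E `` {x}) \<and>
        (\<forall>C\<in>(X // E) - {E `` {x}}. \<forall>D\<in>(X // E) - {E `` {x}}.
            \<exists>!h. h \<in> induced_group X E (U x) \<and> h C = D)) \<and>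
     \<comment> \<open>LM2: U_x^g = U_{xg} for g in the group generated by all U_y\<close>
     (\<forall>x\<in>X. \<forall>g\<in>generate (sym_group X E) (\<Union>y\<in>X. U y).
        (\<lambda>u. inv\<^bsub>sym_group X E\<^esub> g \<otimes>\<^bsub>sym_group X E\<^esub> u \<otimes>\<^bsub>sym_group X E\<^esub> g) ` U x = U (g x))"

definition lms_hom :: "'a set \<Rightarrow> 'a rel \<Rightarrow> ('a \<Rightarrow> ('a \<Rightarrow> 'a) set) \<Rightarrow>
    'b set \<Rightarrow> 'b rel \<Rightarrow> ('b \<Rightarrow> ('b \<Rightarrow> 'b) set) \<Rightarrow> ('a \<Rightarrow> 'b) \<Rightarrow> bool" where
  "lms_hom X E U Y F V \<phi> \<longleftrightarrow>
     (\<forall>x\<in>X. \<phi> x \<in> Y) \<and>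
     (\<forall>x\<in>X. \<forall>x'\<in>X. (x, x') \<in> E \<longleftrightarrow> (\<phi> x, \<phi> x') \<in> F) \<and>
     (\<forall>x\<in>X. \<forall>u\<in>U x. \<exists>v\<in>V (\<phi> x). \<forall>z\<in>X. \<phi> (u z) = v (\<phi> z))"

definition induced_theta :: "'a set \<Rightarrow> ('b \<Rightarrow> ('b \<Rightarrow> 'b) set) \<Rightarrow> ('a \<Rightarrow> 'b) \<Rightarrow> 'a \<Rightarrow>
    ('a \<Rightarrow> 'a) \<Rightarrow> ('b \<Rightarrow> 'b)" where
  "induced_theta X V \<phi> x u = (THE v. v \<in> V (\<phi> x) \<and> (\<forall>z\<in>X. \<phi> (u z) = v (\<phi> z)))"

end

theory Submission
  imports Defs
begin

text \<open>
If \<open>\<phi>\<close> is injective, \<open>\<theta>\<^sub>x(u)\<close> determines \<open>u\<close> on \<open>X\<close>, because \<open>u\<phi> = \<phi>\<theta>\<^sub>x(u)\<close>.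
Conversely, if \<open>\<phi>\<close> identifies two distinct points, they are equivalent (\<open>\<phi>\<close> reflects
\<open>\<sim>\<close>), and after moving them by an element of some root group we may assume their class
differs from that of \<open>x\<close>.  The element \<open>u \<in> U\<^sub>x\<close> sending one point to the other is not
the identity, yet \<open>\<theta>\<^sub>x(u)\<close> fixes their common image, which is not equivalent to \<open>x\<phi>\<close>;
sharp transitivity of \<open>V\<^bsub>x\<phi>\<^esub>\<close> forces \<open>\<theta>\<^sub>x(u) = 1 = \<theta>\<^sub>x(1)\<close>.
\<close>

lemma sym_setD:
  assumes "g \<in> sym_set X E" and "x \<in> X"
  shows "g x \<in> X" and "\<And>y. y \<in> X \<Longrightarrow> g x = g y \<longleftrightarrow> x = y"
    and "\<And>y. y \<in> X \<Longrightarrow> (g x, g y) \<in> E \<longleftrightarrow> (x, y) \<in> E"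
  using assms unfolding sym_set_def bij_betw_def inj_on_def by auto

lemma equiv_unrelated_trans: "equiv X E \<Longrightarrow> (x, y) \<notin> E \<Longrightarrow> (y, z) \<in> E \<Longrightarrow> (x, z) \<notin> E"
  unfolding equiv_def sym_def trans_def by blast

lemma sym_set_outside: "g \<in> sym_set X E \<Longrightarrow> x \<notin> X \<Longrightarrow> g x = x"
  unfolding sym_set_def by blast

lemma local_moufang_setD:
  assumes "local_moufang_set X E U"
  shows local_moufang_set_equiv: "equiv X E"
    and local_moufang_set_three_classes:
      "\<exists>A\<in>X // E. \<exists>B\<in>X // E. \<exists>C\<in>X // E. A \<noteq> B \<and> A \<noteq> C \<and> B \<noteq> C"
    and "\<forall>x\<in>X. subgroup (U x) (sym_group X E)"
    and "\<forall>x\<in>X. (\<forall>g\<in>U x. g x = x) \<and>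
           (\<forall>y\<in>X - E `` {x}. \<forall>z\<in>X - E `` {x}. \<exists>!g. g \<in> U x \<and> g y = z)"
  by (insert assms[unfolded local_moufang_set_def], (elim conjE, assumption)+)

lemma local_moufang_set_subgroup:
  "local_moufang_set X E U \<Longrightarrow> x \<in> X \<Longrightarrow> subgroup (U x) (sym_group X E)"
  using local_moufang_setD(3) by blast

lemma local_moufang_set_fixes: "local_moufang_set X E U \<Longrightarrow> x \<in> X \<Longrightarrow> g \<in> U x \<Longrightarrow> g x = x"
  using local_moufang_setD(4) by blast

lemma local_moufang_set_sharply_transitive:
  "local_moufang_set X E U \<Longrightarrow> x \<in> X \<Longrightarrow> y \<in> X - E `` {x} \<Longrightarrow> z \<in> X - E `` {x} \<Longrightarrow>
     \<exists>!g. g \<in> U x \<and> g y = z"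
  using local_moufang_setD(4) by blast

context
  fixes X :: "'a set" and E :: "'a rel" and U :: "'a \<Rightarrow> ('a \<Rightarrow> 'a) set"
  assumes lms: "local_moufang_set X E U"
begin

lemma lms_avoid_two_classes:
  assumes "x \<in> X" and "y \<in> X"
  obtains w where "w \<in> X" and "(x, w) \<notin> E" and "(y, w) \<notin> E"
proof -
  have equiv: "equiv X E" using local_moufang_set_equiv[OF lms] .
  obtain D where D: "D \<in> X // E" "D \<noteq> E `` {x}" "D \<noteq> E `` {y}"
    using local_moufang_set_three_classes[OF lms] by blast
  then obtain w where w: "w \<in> X" "D = E `` {w}" by (auto elim: quotientE)
  have "(x, w) \<notin> E" "(y, w) \<notin> E"
    using D(2,3) w(2) by (auto dest: equiv_class_eq[OF equiv])
  with w show ?thesis using that by blast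
qed

lemma lms_root_group_sym_set: "x \<in> X \<Longrightarrow> u \<in> U x \<Longrightarrow> u \<in> sym_set X E"
  using subgroup.subset[OF local_moufang_set_subgroup[OF lms]] by (auto simp: sym_group_def)

lemma lms_id_in_root_group: "x \<in> X \<Longrightarrow> id \<in> U x"
  using subgroup.one_closed[OF local_moufang_set_subgroup[OF lms]] by (simp add: sym_group_def)

lemma lms_root_group_preserves_complement:
  assumes "x \<in> X" and "u \<in> U x" and "z \<in> X - E `` {x}"
  shows "u z \<in> X - E `` {x}"
proof -
  have sym: "u \<in> sym_set X E" using lms_root_group_sym_set[OF assms(1,2)] .
  have "u x = x" using local_moufang_set_fixes[OF lms assms(1,2)] .
  then have "(x, u z) \<notin> E" using sym_setD(3)[OF sym \<open>x \<in> X\<close>, of z] assms(3) by simp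
  with sym_setD(1)[OF sym] assms(3) show ?thesis by blast
qed

lemma lms_root_group_eq_if_agree:
  assumes "x \<in> X" and "u \<in> U x" and "u' \<in> U x" and "z \<in> X - E `` {x}" and "u z = u' z"
  shows "u = u'"
proof -
  have "\<exists>!g. g \<in> U x \<and> g z = u z"
    using local_moufang_set_sharply_transitive[OF lms assms(1,4)]
      lms_root_group_preserves_complement[OF assms(1,2,4)] by blast
  then show ?thesis using assms(2,3,5) by (auto elim!: alt_ex1E)
qed

lemma lms_root_group_stabilizer_trivial:
  assumes "x \<in> X" and "u \<in> U x" and "z \<in> X - E `` {x}" and "u z = z"
  shows "u = id"
  using lms_root_group_eq_if_agree[OF assms(1,2) lms_id_in_root_group[OF assms(1)] assms(3)] assms(4)
  by simp

end

lemma lms_hom_maps: "lms_hom X E U Y F V \<phi> \<Longrightarrow> x \<in> X \<Longrightarrow> \<phi> x \<in> Y"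
  unfolding lms_hom_def by blast

lemma lms_hom_equiv_iff:
  "lms_hom X E U Y F V \<phi> \<Longrightarrow> x \<in> X \<Longrightarrow> x' \<in> X \<Longrightarrow> (\<phi> x, \<phi> x') \<in> F \<longleftrightarrow> (x, x') \<in> E"
  unfolding lms_hom_def by blast

lemma lms_hom_intertwines:
  "lms_hom X E U Y F V \<phi> \<Longrightarrow> x \<in> X \<Longrightarrow> u \<in> U x \<Longrightarrow> \<exists>v\<in>V (\<phi> x). \<forall>z\<in>X. \<phi> (u z) = v (\<phi> z)"
  unfolding lms_hom_def by blast

lemma lms_hom_maps_complement:
  assumes "lms_hom X E U Y F V \<phi>" and "x \<in> X" and "z \<in> X - E `` {x}"
  shows "\<phi> z \<in> Y - F `` {\<phi> x}"
  using assms lms_hom_maps[OF assms(1)] lms_hom_equiv_iff[OF assms(1)] by auto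

context
  fixes X :: "'a set" and E :: "'a rel" and U :: "'a \<Rightarrow> ('a \<Rightarrow> 'a) set"
    and Y :: "'b set" and F :: "'b rel" and V :: "'b \<Rightarrow> ('b \<Rightarrow> 'b) set"
    and \<phi> :: "'a \<Rightarrow> 'b"
  assumes lms1: "local_moufang_set X E U"
    and lms2: "local_moufang_set Y F V"
    and hom: "lms_hom X E U Y F V \<phi>"
begin

lemma induced_theta_eqI:
  assumes x: "x \<in> X" and v: "v \<in> V (\<phi> x)" and v_intertwines: "\<forall>z\<in>X. \<phi> (u z) = v (\<phi> z)"
  shows "induced_theta X V \<phi> x u = v"
  unfolding induced_theta_def
proof (rule the_equality)
  fix v' assume v': "v' \<in> V (\<phi> x) \<and> (\<forall>z\<in>X. \<phi> (u z) = v' (\<phi> z))"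
  obtain z where "z \<in> X" and "(x, z) \<notin> E" using lms_avoid_two_classes[OF lms1 x x] by blast
  then have "\<phi> z \<in> Y - F `` {\<phi> x}" using lms_hom_maps_complement[OF hom x] by blast
  moreover have "v' (\<phi> z) = v (\<phi> z)" using v' v_intertwines \<open>z \<in> X\<close> by simp
  ultimately show "v' = v"
    using lms_root_group_eq_if_agree[OF lms2 lms_hom_maps[OF hom x]] v v' by blast
qed (use v v_intertwines in blast)

lemma induced_theta:
  assumes "x \<in> X" and "u \<in> U x"
  shows "induced_theta X V \<phi> x u \<in> V (\<phi> x)"
    and "\<And>z. z \<in> X \<Longrightarrow> \<phi> (u z) = induced_theta X V \<phi> x u (\<phi> z)"
proof -
  obtain v where "v \<in> V (\<phi> x)" and "\<forall>z\<in>X. \<phi> (u z) = v (\<phi> z)"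
    using lms_hom_intertwines[OF hom assms] by blast
  with induced_theta_eqI[OF assms(1)] show "induced_theta X V \<phi> x u \<in> V (\<phi> x)"
    and "\<And>z. z \<in> X \<Longrightarrow> \<phi> (u z) = induced_theta X V \<phi> x u (\<phi> z)"
    by simp_all
qed

lemma induced_theta_id: "x \<in> X \<Longrightarrow> induced_theta X V \<phi> x id = id"
  using induced_theta_eqI[OF _ lms_id_in_root_group[OF lms2 lms_hom_maps[OF hom]]] by simp

lemma inj_on_induced_theta_if_inj_on:
  assumes inj: "inj_on \<phi> X" and x: "x \<in> X"
  shows "inj_on (induced_theta X V \<phi> x) (U x)"
proof (rule inj_onI)
  fix u u' assume u: "u \<in> U x" and u': "u' \<in> U x"
    and eq: "induced_theta X V \<phi> x u = induced_theta X V \<phi> x u'"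
  have sym: "u \<in> sym_set X E" "u' \<in> sym_set X E"
    using lms_root_group_sym_set[OF lms1 x] u u' by auto
  show "u = u'"
  proof
    fix z show "u z = u' z"
    proof (cases "z \<in> X")
      case True
      then have "\<phi> (u z) = \<phi> (u' z)"
        using induced_theta(2)[OF x u True] induced_theta(2)[OF x u' True] eq by simp
      then show ?thesis
        using inj_onD[OF inj _ sym_setD(1)[OF sym(1) True] sym_setD(1)[OF sym(2) True]] by blast
    qed (simp add: sym_set_outside[OF sym(1)] sym_set_outside[OF sym(2)])
  qed
qed

lemma lms_hom_eq_imp_related:
  assumes "a \<in> X" and "b \<in> X" and "\<phi> a = \<phi> b"
  shows "(a, b) \<in> E"
proof -
  have "(\<phi> a, \<phi> b) \<in> F"
    using assms lms_hom_maps[OF hom] local_moufang_set_equiv[OF lms2]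
    by (auto simp: equiv_def refl_on_def)
  then show ?thesis using lms_hom_equiv_iff[OF hom] assms(1,2) by blast
qed

lemma lms_hom_collision_outside_class:
  assumes x: "x \<in> X" and a: "a \<in> X" and b: "b \<in> X" and "a \<noteq> b" and "\<phi> a = \<phi> b"
  obtains a' b' where "a' \<in> X - E `` {x}" and "b' \<in> X - E `` {x}"
    and "a' \<noteq> b'" and "\<phi> a' = \<phi> b'"
proof -
  have equiv: "equiv X E" using local_moufang_set_equiv[OF lms1] .
  have "\<exists>a'\<in>X - E `` {x}. \<exists>b'\<in>X. a' \<noteq> b' \<and> \<phi> a' = \<phi> b'"
  proof (cases "(x, a) \<in> E")
    case False
    with assms show ?thesis by blast
  next
    case xa: True
    \<comment> \<open>an element of \<open>U\<^sub>y\<close>, \<open>y \<not>\<sim> x\<close>, moving \<open>x\<close> into a third class carries the collision along\<close>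
    obtain y where y: "y \<in> X" "(x, y) \<notin> E" using lms_avoid_two_classes[OF lms1 x x] by blast
    obtain w where w: "w \<in> X" "(x, w) \<notin> E" "(y, w) \<notin> E"
      using lms_avoid_two_classes[OF lms1 x y(1)] by blast
    have "x \<in> X - E `` {y}" using x y equiv by (auto elim: equivE dest: symD)
    moreover have "w \<in> X - E `` {y}" using w by blast
    ultimately obtain g where g: "g \<in> U y" "g x = w"
      using local_moufang_set_sharply_transitive[OF lms1 y(1)] by blast
    have g_sym: "g \<in> sym_set X E" using lms_root_group_sym_set[OF lms1 y(1) g(1)] .
    obtain v where "\<forall>z\<in>X. \<phi> (g z) = v (\<phi> z)" using lms_hom_intertwines[OF hom y(1) g(1)] by blast
    then have "\<phi> (g a) = \<phi> (g b)" using a b \<open>\<phi> a = \<phi> b\<close> by simp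
    moreover have "g a \<noteq> g b" using sym_setD(2)[OF g_sym a b] \<open>a \<noteq> b\<close> by simp
    moreover have "(w, g a) \<in> E" using sym_setD(3)[OF g_sym x a] xa g(2) by simp
    then have "(x, g a) \<notin> E" using equiv_unrelated_trans[OF equiv w(2)] by blast
    ultimately show ?thesis using sym_setD(1)[OF g_sym] a b by blast
  qed
  then obtain a' b' where a': "a' \<in> X - E `` {x}" and "b' \<in> X" "a' \<noteq> b'" "\<phi> a' = \<phi> b'"
    by blast
  moreover have "(x, b') \<notin> E"
    using a' lms_hom_eq_imp_related[of a' b'] \<open>b' \<in> X\<close> \<open>\<phi> a' = \<phi> b'\<close> equiv_unrelated_trans[OF equiv] by blast
  ultimately show ?thesis using that by blast
qed

lemma inj_on_if_inj_on_induced_theta: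
  assumes x: "x \<in> X" and inj_theta: "inj_on (induced_theta X V \<phi> x) (U x)"
  shows "inj_on \<phi> X"
proof (rule inj_onI, rule ccontr)
  fix a b assume "a \<in> X" "b \<in> X" "\<phi> a = \<phi> b" "a \<noteq> b"
  then obtain a' b' where a': "a' \<in> X - E `` {x}" and b': "b' \<in> X - E `` {x}"
    and "a' \<noteq> b'" and collide: "\<phi> a' = \<phi> b'"
    using lms_hom_collision_outside_class[OF x] by blast
  obtain u where u: "u \<in> U x" "u a' = b'"
    using local_moufang_set_sharply_transitive[OF lms1 x a' b'] by blast
  have "induced_theta X V \<phi> x u (\<phi> a') = \<phi> (u a')"
    using induced_theta(2)[OF x u(1)] a' by simp
  also have "\<dots> = \<phi> a'" using u(2) collide by simp
  finally have "induced_theta X V \<phi> x u (\<phi> a') = \<phi> a'" .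
  then have "induced_theta X V \<phi> x u = id"
    using lms_root_group_stabilizer_trivial[OF lms2 lms_hom_maps[OF hom x]
        induced_theta(1)[OF x u(1)] lms_hom_maps_complement[OF hom x a']] by blast
  then have "u = id"
    using inj_onD[OF inj_theta _ u(1) lms_id_in_root_group[OF lms1 x]] induced_theta_id[OF x]
    by simp
  with u(2) \<open>a' \<noteq> b'\<close> show False by simp
qed

end

theorem mainTheorem9:
  fixes X :: "'a set" and E :: "'a rel" and U :: "'a \<Rightarrow> ('a \<Rightarrow> 'a) set"
    and Y :: "'b set" and F :: "'b rel" and V :: "'b \<Rightarrow> ('b \<Rightarrow> 'b) set"
    and \<phi> :: "'a \<Rightarrow> 'b"
  assumes "local_moufang_set X E U"
    and "local_moufang_set Y F V"
    and "lms_hom X E U Y F V \<phi>"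
  shows "(inj_on \<phi> X \<longleftrightarrow> (\<forall>x\<in>X. inj_on (induced_theta X V \<phi> x) (U x)))
       \<and> ((\<forall>x\<in>X. inj_on (induced_theta X V \<phi> x) (U x))
            \<longleftrightarrow> (\<exists>x\<in>X. inj_on (induced_theta X V \<phi> x) (U x)))"
proof -
  have "X \<noteq> {}"
    using local_moufang_set_three_classes[OF assms(1)] by (auto simp: quotient_def)
  with inj_on_induced_theta_if_inj_on[OF assms] inj_on_if_inj_on_induced_theta[OF assms]
  show ?thesis by blast
qed

end
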